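(* Consider the secure distributed linearly separable computation problem with $\mathsf K_{\rm c}=1$ and $\mathsf M=\frac{\mathsf K}{\mathsf N}(\mathsf N-\mathsf N_{\rm r}+1)$, and any secure scheme with assignment $\mathbf Z=(\mathcal Z_1,\dots,\mathcal Z_{\mathsf N})$ and randomness size $\eta$. If there exists an ordered set of servers $\mathbf s=(s_1,\dots,s_{|\mathbf s|})$ in $[\mathsf N]$ such that $\mathcal Z_{s_i}\setminus(\mathcal Z_{s_1}\cup\cdots\cup\mathcal Z_{s_{i-1}})\neq\emptyset$ for all $i\in[|\mathbf s|]$, then $\eta\ge|\mathbf s|-1$.
   Context: Problem setting. $\mathsf K,\mathsf N,\mathsf N_{\rm r},\mathsf M$ are positive integers with $\mathsf N_{\rm r}\le \mathsf N$ and $\mathsf N$ dividing $\mathsf K$. Fix a prime power $\mathsf q$ and a positive integer $\mathsf L$. Datasets $D_1,\dots,D_{\mathsf K}$ are independent; the message $W_k=f_k(D_k)\in\mathbb F_{\mathsf q}^{\mathsf L}$, and $W_1,\dots,W_{\mathsf K}$ are mutually independent, each uniform over $\mathbb F_{\mathsf q}^{\mathsf L}$. The user wants $W_1+\cdots+W_{\mathsf K}$. A secure scheme consists of: an assignment $\mathcal Z_n\subseteq[\mathsf K]$, $|\mathcal Z_n|\le\mathsf M$, $n\in[\mathsf N]$; a random variable $Q$ on a finite set, independent of $(D_1,\dots,D_{\mathsf K})$, given to every server but not to the user; transmissions $X_n=\psi_n(\{W_k:k\in\mathcal Z_n\},Q)\in\mathbb F_{\mathsf q}^{\mathsf T_n}$;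 decodability: for every $\mathcal A\subseteq[\mathsf N]$ with $|\mathcal A|=\mathsf N_{\rm r}$, $W_1+\cdots+W_{\mathsf K}$ is a function of $\{X_n:n\in\mathcal A\}$; security: $I(W_1,\dots,W_{\mathsf K};X_1,\dots,X_{\mathsf N}\mid W_1+\cdots+W_{\mathsf K})=0$. The randomness size is $\eta=H(Q)/\mathsf L$, with entropy measured in $\mathsf q$-ary units. (It is known that when $\mathsf M=\frac{\mathsf K}{\mathsf N}(\mathsf N-\mathsf N_{\rm r}+1)$, in any such decodable scheme each dataset is assigned to exactly $\mathsf N-\mathsf N_{\rm r}+1$ servers and each server receives exactly $\mathsf M$ datasets.) *)

theory Defs
  imports "HOL-Probability.Probability"
begin

text \<open>Messages W_1..W_K, each in F_q^L, are encoded as an extensional function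
  w :: nat => nat => 'f with w k l the l-th coordinate (l < L) of W_k (1 <= k <= K).\<close>
definition msg_space :: "nat \<Rightarrow> nat \<Rightarrow> (nat \<Rightarrow> nat \<Rightarrow> 'f) set" where
  "msg_space K L = PiE {1..K} (\<lambda>_. PiE {..<L} (\<lambda>_. UNIV))"

definition msg_sum :: "nat \<Rightarrow> nat \<Rightarrow> (nat \<Rightarrow> nat \<Rightarrow> 'f::comm_ring_1) \<Rightarrow> (nat \<Rightarrow> 'f)" where
  "msg_sum K L w = (\<lambda>l\<in>{..<L}. \<Sum>k\<in>{1..K}. w k l)"

definition joint_pmf :: "nat \<Rightarrow> nat \<Rightarrow> 'r pmf \<Rightarrow> ((nat \<Rightarrow> nat \<Rightarrow> 'f::finite) \<times> 'r) pmf" where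
  "joint_pmf K L Q = pair_pmf (pmf_of_set (msg_space K L)) Q"

definition sample_space :: "nat \<Rightarrow> nat \<Rightarrow> 'r pmf \<Rightarrow> ((nat \<Rightarrow> nat \<Rightarrow> 'f::finite) \<times> 'r) measure" where
  "sample_space K L Q = restrict_space (measure_pmf (joint_pmf K L Q)) (set_pmf (joint_pmf K L Q))"

end

theory Submission
  imports Defs
begin

(* Let Y_i be the transmissions of s_1, ..., s_i and let W_k be a message stored at s_i but at
   none of s_1, ..., s_(i-1).  Under the storage bound every message
   is missing from exactly Nr - 1 servers; together with s_i they form a decodable set, so X_(s_i)
   and (W_(-k), Q) determine (W, Q), while Y_(i-1) is already a function of (W_(-k), Q).
   Submodularity of entropy gives H(Y_i) >= H(Y_(i-1)) + L, hence H(Y_|s|) >= |s| L.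
   Security, I(W; X | W_1 + ... + W_K) = 0, turns this into
   H(Q) >= H(Y_|s|) - H(W_1 + ... + W_K) >= (|s| - 1) L. *)

section \<open>Entropy on finite probability spaces\<close>

locale finite_information_space = information_space +
  assumes finite_space: "finite (space M)"
    and sets_eq_Pow: "sets M = Pow (space M)"
begin

definition prob_eq :: "('a \<Rightarrow> 'c) \<Rightarrow> 'c \<Rightarrow> real" where
  "prob_eq X x = prob {\<omega> \<in> space M. X \<omega> = x}"

lemma simple_function_finite [simp]: "simple_function M X"
  unfolding simple_function_def using finite_space sets_eq_Pow by auto

lemma prob_eq_pos:
  assumes "\<omega> \<in> space M" and "prob {\<omega>} \<noteq> 0"
  shows "0 < prob_eq X (X \<omega>)"
proof -
  have "prob {\<omega>} \<le> prob_eq X (X \<omega>)"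
    unfolding prob_eq_def using assms(1) by (intro finite_measure_mono) (auto simp: sets_eq_Pow)
  then show ?thesis using assms(2) measure_nonneg[of M "{\<omega>}"] by linarith
qed

lemma sum_image_prob_eq:
  "(\<Sum>x\<in>X ` space M. prob_eq X x * f x) = (\<Sum>\<omega>\<in>space M. prob {\<omega>} * f (X \<omega>))"
proof -
  have "prob_eq X x = (\<Sum>\<omega>\<in>{\<omega> \<in> space M. X \<omega> = x}. prob {\<omega>})" for x
    unfolding prob_eq_def
    by (rule measure_eq_sum_singleton) (auto intro: finite_subset[OF _ finite_space] simp: sets_eq_Pow)
  then have "(\<Sum>x\<in>X ` space M. prob_eq X x * f x)
      = (\<Sum>x\<in>X ` space M. \<Sum>\<omega>\<in>{\<omega> \<in> space M. X \<omega> = x}. prob {\<omega>} * f (X \<omega>))"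
    by (simp add: sum_distrib_right)
  also have "\<dots> = (\<Sum>\<omega>\<in>space M. prob {\<omega>} * f (X \<omega>))"
    by (rule sum.image_gen[OF finite_space, symmetric])
  finally show ?thesis .
qed

lemma simple_distributed_prob_eq: "simple_distributed M X (prob_eq X)"
  unfolding prob_eq_def
  by (rule simple_distributedI) (auto simp: measure_nonneg vimage_def Int_def conj_commute)

lemma entropy_eq_sum_points: "\<H>(X) = - (\<Sum>\<omega>\<in>space M. prob {\<omega>} * log b (prob_eq X (X \<omega>)))"
  by (simp add: entropy_simple_distributed[OF simple_distributed_prob_eq] sum_image_prob_eq)

lemma entropy_nonneg: "0 \<le> \<H>(X)"
  using conditional_entropy_nonneg[of X X] conditional_entropy_less_eq_entropy[of X X] by simp

lemma entropy_cong:
  assumes "\<And>\<omega>. \<omega> \<in> space M \<Longrightarrow> X \<omega> = Y \<omega>"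
  shows "\<H>(X) = \<H>(Y)"
proof -
  have "X ` space M = Y ` space M" using assms by (rule image_cong[OF refl])
  moreover have "distr M (count_space (Y ` space M)) X = distr M (count_space (Y ` space M)) Y"
    using assms by (intro distr_cong) simp_all
  ultimately show ?thesis unfolding entropy_def by simp
qed

lemma entropy_le_if_determined:
  assumes "\<And>\<omega>. \<omega> \<in> space M \<Longrightarrow> X \<omega> = f (Y \<omega>)"
  shows "\<H>(X) \<le> \<H>(Y)"
proof -
  have "\<H>(X) = \<H>(f \<circ> Y)" using assms by (intro entropy_cong) simp
  also have "\<dots> \<le> \<H>(Y)" by (rule entropy_data_processing) simp
  finally show ?thesis .
qed

lemma entropy_eq_if_determined:
  assumes "\<And>\<omega>. \<omega> \<in> space M \<Longrightarrow> X \<omega> = f (Y \<omega>)"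
    and "\<And>\<omega>. \<omega> \<in> space M \<Longrightarrow> Y \<omega> = g (X \<omega>)"
  shows "\<H>(X) = \<H>(Y)"
  using entropy_le_if_determined[of X f Y] entropy_le_if_determined[of Y g X] assms by (meson antisym)

lemma entropy_pair_le: "\<H>(\<lambda>\<omega>. (X \<omega>, Y \<omega>)) \<le> \<H>(X) + \<H>(Y)"
  using entropy_chain_rule[of X Y] conditional_entropy_less_eq_entropy[of Y X] by simp

lemma entropy_le_log_card:
  assumes "X ` space M \<subseteq> A" and "finite A"
  shows "\<H>(X) \<le> log b (card A)"
proof -
  have "0 < card (X ` space M)"
    using finite_space not_empty by (simp add: card_gt_0_iff)
  moreover have "card (X ` space M) \<le> card A"
    using assms by (rule card_mono[rotated])
  ultimately have "log b (card (X ` space M)) \<le> log b (card A)"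
    using b_gt_1 by simp
  then show ?thesis
    using entropy_le_card[OF simple_distributed_prob_eq, of X] by linarith
qed

lemma entropy_eq_log_if_uniform:
  assumes "\<And>\<omega>. \<omega> \<in> space M \<Longrightarrow> prob_eq X (X \<omega>) = 1 / c" and "0 < c"
  shows "\<H>(X) = log b c"
proof -
  have "(\<Sum>\<omega>\<in>space M. prob {\<omega>}) = 1"
    using measure_eq_sum_singleton[OF finite_space] prob_space sets_eq_Pow by auto
  then show ?thesis
    using assms b_gt_1 by (simp add: entropy_eq_sum_points log_divide sum_negf sum_distrib_right[symmetric])
qed

lemma entropy_pair_eq_if_indep:
  assumes "\<And>\<omega>. \<omega> \<in> space M \<Longrightarrow>
      prob_eq (\<lambda>\<omega>. (X \<omega>, Y \<omega>)) (X \<omega>, Y \<omega>) = prob_eq X (X \<omega>) * prob_eq Y (Y \<omega>)"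
  shows "\<H>(\<lambda>\<omega>. (X \<omega>, Y \<omega>)) = \<H>(X) + \<H>(Y)"
proof -
  have "prob {\<omega>} * log b (prob_eq (\<lambda>\<omega>. (X \<omega>, Y \<omega>)) (X \<omega>, Y \<omega>))
      = prob {\<omega>} * log b (prob_eq X (X \<omega>)) + prob {\<omega>} * log b (prob_eq Y (Y \<omega>))"
    if "\<omega> \<in> space M" for \<omega>
    using assms[OF that] prob_eq_pos[OF that, of X] prob_eq_pos[OF that, of Y]
    by (cases "prob {\<omega>} = 0") (simp_all add: log_mult distrib_left)
  then show ?thesis
    by (simp add: entropy_eq_sum_points sum.distrib)
qed

lemma conditional_mutual_information_eq_entropies:
  "\<I>(X ; Y | Z) = \<H>(\<lambda>\<omega>. (X \<omega>, Z \<omega>)) + \<H>(\<lambda>\<omega>. (Y \<omega>, Z \<omega>)) - \<H>(\<lambda>\<omega>. (X \<omega>, Y \<omega>, Z \<omega>)) - \<H>(Z)"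
proof -
  let ?XYZ = "\<lambda>\<omega>. (X \<omega>, Y \<omega>, Z \<omega>)" and ?XZ = "\<lambda>\<omega>. (X \<omega>, Z \<omega>)" and ?YZ = "\<lambda>\<omega>. (Y \<omega>, Z \<omega>)"
  let ?l = "\<lambda>V \<omega>. prob {\<omega>} * log b (prob_eq V (V \<omega>))"
  have "\<I>(X ; Y | Z) = (\<Sum>\<omega>\<in>space M. prob {\<omega>} *
      log b (prob_eq ?XYZ (?XYZ \<omega>) / (prob_eq ?XZ (?XZ \<omega>) * (prob_eq ?YZ (?YZ \<omega>) / prob_eq Z (Z \<omega>)))))"
    by (simp add: conditional_mutual_information_eq[OF simple_distributed_prob_eq simple_distributed_prob_eq
          simple_distributed_prob_eq simple_distributed_prob_eq] split_beta' sum_image_prob_eq[where X = ?XYZ])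
  also have "\<dots> = (\<Sum>\<omega>\<in>space M. ?l ?XYZ \<omega> - ?l ?XZ \<omega> - ?l ?YZ \<omega> + ?l Z \<omega>)"
  proof (intro sum.cong refl)
    fix \<omega> assume \<omega>: "\<omega> \<in> space M"
    show "prob {\<omega>} * log b (prob_eq ?XYZ (?XYZ \<omega>) /
        (prob_eq ?XZ (?XZ \<omega>) * (prob_eq ?YZ (?YZ \<omega>) / prob_eq Z (Z \<omega>))))
        = ?l ?XYZ \<omega> - ?l ?XZ \<omega> - ?l ?YZ \<omega> + ?l Z \<omega>"
      using prob_eq_pos[OF \<omega>, of ?XYZ] prob_eq_pos[OF \<omega>, of ?XZ] prob_eq_pos[OF \<omega>, of ?YZ]
        prob_eq_pos[OF \<omega>, of Z]
      by (cases "prob {\<omega>} = 0") (simp_all add: log_divide log_mult algebra_simps)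
  qed
  also have "\<dots> = \<H>(?XZ) + \<H>(?YZ) - \<H>(?XYZ) - \<H>(Z)"
    by (simp add: entropy_eq_sum_points sum.distrib sum_subtractf)
  finally show ?thesis .
qed

lemma entropy_submodular:
  "\<H>(\<lambda>\<omega>. (X \<omega>, Y \<omega>, Z \<omega>)) + \<H>(Z) \<le> \<H>(\<lambda>\<omega>. (X \<omega>, Z \<omega>)) + \<H>(\<lambda>\<omega>. (Y \<omega>, Z \<omega>))"
  using conditional_mutual_information_nonneg[of X Y Z] conditional_mutual_information_eq_entropies[of X Y Z]
  by simp

lemma entropy_pair_ge_if_determined:
  assumes "\<And>\<omega>. \<omega> \<in> space M \<Longrightarrow> Y \<omega> = f (V \<omega>)"
    and "\<And>\<omega>. \<omega> \<in> space M \<Longrightarrow> Z \<omega> = g (X \<omega>, V \<omega>)"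
  shows "\<H>(Y) + \<H>(Z) \<le> \<H>(\<lambda>\<omega>. (X \<omega>, Y \<omega>)) + \<H>(V)"
proof -
  have "\<H>(\<lambda>\<omega>. (X \<omega>, V \<omega>, Y \<omega>)) + \<H>(Y) \<le> \<H>(\<lambda>\<omega>. (X \<omega>, Y \<omega>)) + \<H>(\<lambda>\<omega>. (V \<omega>, Y \<omega>))"
    by (rule entropy_submodular)
  moreover have "\<H>(Z) \<le> \<H>(\<lambda>\<omega>. (X \<omega>, V \<omega>, Y \<omega>))"
    by (rule entropy_le_if_determined[where f = "\<lambda>(x, v, y). g (x, v)"]) (simp add: assms)
  moreover have "\<H>(\<lambda>\<omega>. (V \<omega>, Y \<omega>)) = \<H>(V)"
    by (rule entropy_eq_if_determined[where f = "\<lambda>v. (v, f v)" and g = fst]) (simp_all add: assms)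
  ultimately show ?thesis by linarith
qed

lemma entropy_add_le_if_cond_indep:
  assumes indep: "\<I>(W ; X | S) = 0"
    and S: "\<And>\<omega>. \<omega> \<in> space M \<Longrightarrow> S \<omega> = f (W \<omega>)"
    and Y: "\<And>\<omega>. \<omega> \<in> space M \<Longrightarrow> Y \<omega> = g (X \<omega>)"
  shows "\<H>(W) + \<H>(Y) \<le> \<H>(\<lambda>\<omega>. (W \<omega>, Y \<omega>)) + \<H>(S)"
proof -
  have "\<H>(\<lambda>\<omega>. (W \<omega>, X \<omega>, Y \<omega>, S \<omega>)) + \<H>(\<lambda>\<omega>. (Y \<omega>, S \<omega>))
      \<le> \<H>(\<lambda>\<omega>. (W \<omega>, Y \<omega>, S \<omega>)) + \<H>(\<lambda>\<omega>. (X \<omega>, Y \<omega>, S \<omega>))"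
    by (rule entropy_submodular)
  moreover have "\<H>(\<lambda>\<omega>. (W \<omega>, X \<omega>, Y \<omega>, S \<omega>)) = \<H>(\<lambda>\<omega>. (W \<omega>, X \<omega>, S \<omega>))"
    by (rule entropy_eq_if_determined[where f = "\<lambda>(w, x, s). (w, x, g x, s)"
          and g = "\<lambda>(w, x, y, s). (w, x, s)"]) (simp_all add: Y)
  moreover have "\<H>(\<lambda>\<omega>. (X \<omega>, Y \<omega>, S \<omega>)) = \<H>(\<lambda>\<omega>. (X \<omega>, S \<omega>))"
    by (rule entropy_eq_if_determined[where f = "\<lambda>(x, s). (x, g x, s)" and g = "\<lambda>(x, y, s). (x, s)"])
       (simp_all add: Y)
  moreover have "\<H>(\<lambda>\<omega>. (W \<omega>, Y \<omega>, S \<omega>)) = \<H>(\<lambda>\<omega>. (W \<omega>, Y \<omega>))"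
    by (rule entropy_eq_if_determined[where f = "\<lambda>(w, y). (w, y, f w)" and g = "\<lambda>(w, y, s). (w, y)"])
       (simp_all add: S)
  moreover have "\<H>(Y) \<le> \<H>(\<lambda>\<omega>. (Y \<omega>, S \<omega>))"
    by (rule entropy_le_if_determined[where f = fst]) simp
  moreover have "\<H>(\<lambda>\<omega>. (W \<omega>, S \<omega>)) = \<H>(W)"
    by (rule entropy_eq_if_determined[where f = "\<lambda>w. (w, f w)" and g = fst]) (simp_all add: S)
  ultimately show ?thesis
    using indep conditional_mutual_information_eq_entropies[of W X S] by linarith
qed

end

section \<open>Messages and the sample space\<close>

lemma finite_msg_space: "finite (msg_space K L :: (nat \<Rightarrow> nat \<Rightarrow> 'f::finite) set)"
  unfolding msg_space_def by (intro finite_PiE) auto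

lemma msg_space_not_empty: "msg_space K L \<noteq> {}"
  unfolding msg_space_def by (simp add: PiE_eq_empty_iff)

lemma card_msg_space: "card (msg_space K L :: (nat \<Rightarrow> nat \<Rightarrow> 'f::finite) set) = CARD('f) ^ (L * K)"
  unfolding msg_space_def by (simp add: card_PiE power_mult)

lemma space_sample_space:
  "space (sample_space K L Q :: ((nat \<Rightarrow> nat \<Rightarrow> 'f::finite) \<times> 'r) measure) = msg_space K L \<times> set_pmf Q"
  unfolding sample_space_def joint_pmf_def
  by (simp add: space_restrict_space finite_msg_space msg_space_not_empty)

lemma snd_space_sample_space: "snd ` space (sample_space K L Q) = set_pmf Q"
  by (simp add: space_sample_space msg_space_not_empty)

lemma sets_sample_space: "sets (sample_space K L Q) = Pow (space (sample_space K L Q))"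
  unfolding sample_space_def by (auto simp: sets_restrict_space space_restrict_space)

lemma prob_space_sample_space: "prob_space (sample_space K L Q)"
  unfolding sample_space_def
  by (rule prob_space_restrict_space) (simp_all add: measure_pmf.emeasure_eq_1_AE AE_measure_pmf)

lemma measure_sample_space_Times:
  assumes "A \<subseteq> msg_space K L" and "B \<subseteq> set_pmf Q" and "finite B"
  shows "measure (sample_space K L Q :: ((nat \<Rightarrow> nat \<Rightarrow> 'f::finite) \<times> 'r) measure) (A \<times> B)
    = card A / CARD('f) ^ (L * K) * measure_pmf.prob Q B"
proof -
  have "finite A" using assms(1) finite_msg_space by (rule finite_subset)
  have "measure (sample_space K L Q :: ((nat \<Rightarrow> nat \<Rightarrow> 'f) \<times> 'r) measure) (A \<times> B)
      = (\<Sum>(w, r)\<in>A \<times> B. pmf (pmf_of_set (msg_space K L)) w * pmf Q r)"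
    unfolding sample_space_def joint_pmf_def using assms \<open>finite A\<close>
    by (subst measure_restrict_space)
       (auto simp: measure_measure_pmf_finite pmf_pair finite_msg_space msg_space_not_empty split_beta'
         intro!: sum.cong)
  also have "\<dots> = card A / CARD('f) ^ (L * K) * (\<Sum>r\<in>B. pmf Q r)"
    using assms(1) by (simp add: sum.cartesian_product[symmetric] sum_product[symmetric] subsetD
        finite_msg_space msg_space_not_empty card_msg_space sum_divide_distrib[symmetric])
  finally show ?thesis using assms(3) by (simp add: measure_measure_pmf_finite)
qed

lemma msg_space_upd:
  assumes "w \<in> msg_space K L" and "k \<in> {1..K}" and "u \<in> PiE {..<L} (\<lambda>_. UNIV)"
  shows "w(k := u) \<in> msg_space K L"
  using assms unfolding msg_space_def by (auto simp: PiE_iff extensional_def)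

lemma restrict_msg_upd:
  assumes "w \<in> msg_space K L"
  shows "(restrict w ({1..K} - {k}))(k := u) = w(k := u)"
  using assms unfolding msg_space_def by (auto simp: PiE_iff extensional_def)

lemma msg_sum_upd:
  assumes "w \<in> msg_space K L" and "k \<in> {1..K}" and "l < L"
  shows "msg_sum K L (w(k := u)) l = msg_sum K L w l - w k l + u l"
  using assms by (simp add: msg_sum_def sum.remove)

lemma msg_upd_recover:
  fixes w :: "nat \<Rightarrow> nat \<Rightarrow> 'f::comm_ring_1"
  assumes "w \<in> msg_space K L" and "k \<in> {1..K}"
  shows "w(k := (\<lambda>l\<in>{..<L}. msg_sum K L w l - (\<Sum>j\<in>{1..K} - {k}. w j l))) = w"
proof
  fix j
  have "w k \<in> PiE {..<L} (\<lambda>_. UNIV)" using assms unfolding msg_space_def by blast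
  then show "(w(k := (\<lambda>l\<in>{..<L}. msg_sum K L w l - (\<Sum>j\<in>{1..K} - {k}. w j l)))) j = w j"
    using assms(2) by (auto simp: msg_sum_def sum.remove PiE_iff extensional_def)
qed

section \<open>Counting under the storage bound\<close>

lemma card_servers_without_eq_if_storage_tight:
  fixes Z :: "nat \<Rightarrow> nat set"
  assumes "Nr \<le> N" and storage: "N * M = K * (N - Nr + 1)"
    and Z_sub: "\<forall>n\<in>{1..N}. Z n \<subseteq> {1..K}" and Z_card: "\<forall>n\<in>{1..N}. card (Z n) \<le> M"
    and without_lt: "\<forall>k\<in>{1..K}. card {n\<in>{1..N}. k \<notin> Z n} < Nr"
    and k: "k \<in> {1..K}"
  shows "card {n\<in>{1..N}. k \<notin> Z n} = Nr - 1"
proof -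
  define holders where "holders j = card {n\<in>{1..N}. j \<in> Z n}" for j
  have without: "card {n\<in>{1..N}. j \<notin> Z n} = N - holders j" for j
  proof -
    have "{n\<in>{1..N}. j \<notin> Z n} = {1..N} - {n\<in>{1..N}. j \<in> Z n}" by auto
    moreover have "card ({1..N} - {n\<in>{1..N}. j \<in> Z n}) = card {1..N} - card {n\<in>{1..N}. j \<in> Z n}"
      by (rule card_Diff_subset) auto
    ultimately show ?thesis unfolding holders_def by simp
  qed
  have lower: "N - Nr + 1 \<le> holders j" if "j \<in> {1..K}" for j
    using without_lt that without[of j] \<open>Nr \<le> N\<close> by fastforce
  have "(\<Sum>j\<in>{1..K}. holders j) = (\<Sum>n\<in>{1..N}. card {j\<in>{1..K}. j \<in> Z n})"
    unfolding holders_def by (rule sum_multicount_gen[symmetric]) auto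
  also have "\<dots> = (\<Sum>n\<in>{1..N}. card (Z n))"
    using Z_sub by (intro sum.cong refl arg_cong[where f = card]) blast+
  also have "\<dots> \<le> N * M"
    using sum_mono[of "{1..N}" "\<lambda>n. card (Z n)" "\<lambda>_. M"] Z_card by simp
  finally have "\<not> (\<Sum>j\<in>{1..K}. N - Nr + 1) < (\<Sum>j\<in>{1..K}. holders j)"
    using storage by simp
  then have "holders k \<le> N - Nr + 1"
    using sum_strict_mono_ex1[of "{1..K}" "\<lambda>_. N - Nr + 1" holders] lower k by force
  then show ?thesis
    using lower[OF k] without[of k] \<open>Nr \<le> N\<close> by simp
qed

lemma finite_information_space_sample_space:
  assumes "finite (set_pmf Q)"
  shows "finite_information_space
    (sample_space K L Q :: ((nat \<Rightarrow> nat \<Rightarrow> 'f::{finite,zero_neq_one}) \<times> 'r) measure) (real CARD('f))"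
proof (intro finite_information_space.intro information_space.intro
    information_space_axioms.intro finite_information_space_axioms.intro)
  have "card {0::'f, 1} \<le> CARD('f)" by (rule card_mono) auto
  then show "1 < real CARD('f)" by simp
qed (simp_all add: prob_space_sample_space sets_sample_space space_sample_space finite_msg_space assms)

section \<open>Distributed sum schemes\<close>

(* M and b are parameters pinned down by M_eq and b_eq, rather than instantiated through a
   sublocale, so that the entropy notation of information_space remains available. *)
locale distributed_sum_scheme = finite_information_space M b
  for M :: "((nat \<Rightarrow> nat \<Rightarrow> 'f::{finite,field}) \<times> 'r) measure" and b :: real +
  fixes K N Nr L :: nat
    and Z :: "nat \<Rightarrow> nat set"
    and Q :: "'r pmf"
    and \<psi> :: "nat \<Rightarrow> (nat \<Rightarrow> nat \<Rightarrow> 'f) \<Rightarrow> 'r \<Rightarrow> 'f list"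
  assumes M_eq: "M = sample_space K L Q"
    and b_eq: "b = real CARD('f)"
    and L_pos: "L > 0"
    and Z_sub: "\<forall>n\<in>{1..N}. Z n \<subseteq> {1..K}"
    and psi_dep: "\<forall>n\<in>{1..N}. \<forall>w\<in>msg_space K L. \<forall>w'\<in>msg_space K L. \<forall>r.
                    (\<forall>k\<in>Z n. w k = w' k) \<longrightarrow> \<psi> n w r = \<psi> n w' r"
    and decodable: "\<forall>A. A \<subseteq> {1..N} \<and> card A = Nr \<longrightarrow>
                    (\<exists>g. \<forall>w\<in>msg_space K L. \<forall>r\<in>set_pmf Q.
                        g (\<lambda>n\<in>A. \<psi> n w r) = msg_sum K L w)"
begin

lemma space_eq: "space M = msg_space K L \<times> set_pmf Q"
  by (simp add: M_eq space_sample_space)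

lemma finite_set_pmf: "finite (set_pmf Q)"
  using finite_space msg_space_not_empty unfolding space_eq by (rule finite_cartesian_productD2)

definition transmissions :: "nat list \<Rightarrow> (nat \<Rightarrow> nat \<Rightarrow> 'f) \<times> 'r \<Rightarrow> 'f list list" where
  "transmissions ns \<omega> = map (\<lambda>n. \<psi> n (fst \<omega>) (snd \<omega>)) ns"

lemma psi_upd_eq:
  assumes "n \<in> {1..N}" and "k \<notin> Z n" and "w \<in> msg_space K L" and "k \<in> {1..K}"
    and "u \<in> PiE {..<L} (\<lambda>_. UNIV)"
  shows "\<psi> n (w(k := u)) r = \<psi> n w r"
  by (rule psi_dep[rule_format, OF assms(1) msg_space_upd[OF assms(3-5)] assms(3)]) (use assms(2) in auto)

lemma card_servers_without_lt:
  assumes k: "k \<in> {1..K}"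
  shows "card {n\<in>{1..N}. k \<notin> Z n} < Nr"
proof (rule ccontr)
  assume "\<not> ?thesis"
  then obtain A where A: "A \<subseteq> {n\<in>{1..N}. k \<notin> Z n}" "card A = Nr"
    by (meson not_less obtain_subset_with_card_n)
  then obtain g where g: "\<forall>w\<in>msg_space K L. \<forall>r\<in>set_pmf Q. g (\<lambda>n\<in>A. \<psi> n w r) = msg_sum K L w"
    using decodable by blast
  obtain r where r: "r \<in> set_pmf Q" using set_pmf_not_empty[of Q] by blast
  obtain w where w: "w \<in> (msg_space K L :: (nat \<Rightarrow> nat \<Rightarrow> 'f) set)" using msg_space_not_empty by blast
  define u where "u = (\<lambda>l\<in>{..<L}. w k l + 1)"
  have u: "u \<in> PiE {..<L} (\<lambda>_. UNIV)" unfolding u_def by simp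
  have "(\<lambda>n\<in>A. \<psi> n (w(k := u)) r) = (\<lambda>n\<in>A. \<psi> n w r)"
    using A psi_upd_eq[OF _ _ w k u] by (intro restrict_ext) auto
  then have "msg_sum K L (w(k := u)) = msg_sum K L w"
    using g msg_space_upd[OF w k u] w r by metis
  moreover have "msg_sum K L (w(k := u)) 0 = msg_sum K L w 0 + 1"
    using msg_sum_upd[OF w k L_pos] L_pos by (simp add: u_def)
  ultimately show False by simp
qed

lemma prob_eq_messages:
  assumes "\<omega> \<in> space M"
  shows "prob_eq fst (fst \<omega>) = 1 / b ^ (L * K)"
proof -
  have "prob_eq fst (fst \<omega>) = measure M ({fst \<omega>} \<times> set_pmf Q)"
    unfolding prob_eq_def using assms by (intro arg_cong[where f = "measure M"]) (auto simp: space_eq)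
  also have "\<dots> = 1 / b ^ (L * K) * measure_pmf.prob Q (set_pmf Q)"
    unfolding M_eq b_eq using assms[unfolded space_eq]
    by (subst measure_sample_space_Times) (auto simp: finite_set_pmf mem_Times_iff)
  also have "measure_pmf.prob Q (set_pmf Q) = 1"
    by (subst measure_pmf.prob_eq_1) (auto simp: AE_measure_pmf_iff)
  finally show ?thesis by simp
qed

lemma prob_eq_randomness:
  assumes "\<omega> \<in> space M"
  shows "prob_eq snd (snd \<omega>) = pmf Q (snd \<omega>)"
proof -
  have "prob_eq snd (snd \<omega>) = measure M (msg_space K L \<times> {snd \<omega>})"
    unfolding prob_eq_def using assms by (intro arg_cong[where f = "measure M"]) (auto simp: space_eq)
  also have "\<dots> = pmf Q (snd \<omega>)"
    unfolding M_eq using assms[unfolded space_eq]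
    by (subst measure_sample_space_Times) (auto simp: mem_Times_iff card_msg_space measure_pmf_single)
  finally show ?thesis .
qed

lemma prob_eq_sample:
  assumes "\<omega> \<in> space M"
  shows "prob_eq (\<lambda>\<omega>. (fst \<omega>, snd \<omega>)) (fst \<omega>, snd \<omega>) = prob_eq fst (fst \<omega>) * prob_eq snd (snd \<omega>)"
proof -
  have "prob_eq (\<lambda>\<omega>. (fst \<omega>, snd \<omega>)) (fst \<omega>, snd \<omega>) = measure M ({fst \<omega>} \<times> {snd \<omega>})"
    unfolding prob_eq_def using assms by (intro arg_cong[where f = "measure M"]) auto
  also have "\<dots> = 1 / b ^ (L * K) * pmf Q (snd \<omega>)"
    unfolding M_eq b_eq using assms[unfolded space_eq]
    by (subst measure_sample_space_Times) (auto simp: mem_Times_iff measure_pmf_single)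
  finally show ?thesis
    using assms by (simp add: prob_eq_messages prob_eq_randomness)
qed

lemma entropy_messages: "\<H>(fst) = real (L * K)"
proof -
  have "\<H>(fst) = log b (b ^ (L * K))"
    using b_gt_1 by (intro entropy_eq_log_if_uniform) (simp_all add: prob_eq_messages)
  then show ?thesis using b_gt_1 by (simp add: b_eq)
qed

lemma entropy_sample: "\<H>(\<lambda>\<omega>. (fst \<omega>, snd \<omega>)) = real (L * K) + \<H>(snd)"
proof -
  have "\<H>(\<lambda>\<omega>. (fst \<omega>, snd \<omega>)) = \<H>(fst) + \<H>(snd)"
    by (rule entropy_pair_eq_if_indep) (rule prob_eq_sample)
  then show ?thesis using entropy_messages by linarith
qed

lemma entropy_other_messages_le:
  assumes k: "k \<in> {1..K}"
  shows "\<H>(\<lambda>\<omega>. restrict (fst \<omega>) ({1..K} - {k})) \<le> real (L * (K - 1))"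
proof -
  let ?others = "PiE ({1..K} - {k}) (\<lambda>_. PiE {..<L} (\<lambda>_. UNIV :: 'f set))"
  have "(\<lambda>\<omega>. restrict (fst \<omega>) ({1..K} - {k})) ` space M \<subseteq> ?others"
  proof (rule image_subsetI)
    fix \<omega> assume "\<omega> \<in> space M"
    then have "fst \<omega> \<in> PiE {1..K} (\<lambda>_. PiE {..<L} (\<lambda>_. UNIV))"
      by (simp add: space_eq mem_Times_iff msg_space_def)
    then show "restrict (fst \<omega>) ({1..K} - {k}) \<in> ?others"
      unfolding restrict_PiE_iff by blast
  qed
  then have "\<H>(\<lambda>\<omega>. restrict (fst \<omega>) ({1..K} - {k})) \<le> log b (card ?others)"
    by (rule entropy_le_log_card) (intro finite_PiE; simp)
  also have "log b (card ?others) = real (L * (K - 1))"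
    using k b_gt_1 by (simp add: b_eq card_PiE power_mult[symmetric] log_pow_cancel)
  finally show ?thesis .
qed

lemma entropy_msg_sum_le: "\<H>(\<lambda>\<omega>. msg_sum K L (fst \<omega>)) \<le> real L"
proof -
  have sum_in: "msg_sum K L w \<in> PiE {..<L} (\<lambda>_. UNIV :: 'f set)" for w
    unfolding msg_sum_def by simp
  have "\<H>(\<lambda>\<omega>. msg_sum K L (fst \<omega>)) \<le> log b (card (PiE {..<L} (\<lambda>_. UNIV :: 'f set)))"
    by (intro entropy_le_log_card image_subsetI sum_in finite_PiE) auto
  then show ?thesis using b_gt_1 by (simp add: b_eq card_PiE log_pow_cancel)
qed

lemma message_decodable_from_others:
  assumes n: "n \<in> {1..N}" and k: "k \<in> Z n"
    and enough: "Nr - 1 \<le> card {m\<in>{1..N}. k \<notin> Z m}"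
  obtains h where "\<And>w r. w \<in> msg_space K L \<Longrightarrow> r \<in> set_pmf Q \<Longrightarrow>
    h (\<psi> n w r) (restrict w ({1..K} - {k})) r = w"
proof -
  have kK: "k \<in> {1..K}" using Z_sub n k by blast
  obtain B where B: "B \<subseteq> {m\<in>{1..N}. k \<notin> Z m}" "card B = Nr - 1" "finite B"
    using obtain_subset_with_card_n[OF enough] .
  have "n \<notin> B" using B(1) k by blast
  moreover have "0 < Nr" using card_servers_without_lt[OF kK] by linarith
  ultimately have "card (insert n B) = Nr" using B(2,3) by simp
  moreover have "insert n B \<subseteq> {1..N}" using B(1) n by blast
  ultimately obtain g where g: "\<forall>w\<in>msg_space K L. \<forall>r\<in>set_pmf Q.
      g (\<lambda>m\<in>insert n B. \<psi> m w r) = msg_sum K L w"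
    using decodable by blast
  (* The servers in B do not store W_k, so their transmissions can be recomputed with W_k zeroed. *)
  define zero :: "nat \<Rightarrow> 'f" where "zero = (\<lambda>l\<in>{..<L}. 0)"
  define h where "h x v r = v(k := (\<lambda>l\<in>{..<L}.
      g ((\<lambda>m\<in>B. \<psi> m (v(k := zero)) r)(n := x)) l - (\<Sum>j\<in>{1..K} - {k}. v j l)))" for x v r
  show thesis
  proof
    fix w :: "nat \<Rightarrow> nat \<Rightarrow> 'f" and r
    assume w: "w \<in> msg_space K L" and r: "r \<in> set_pmf Q"
    have "(\<lambda>m\<in>B. \<psi> m (w(k := zero)) r)(n := \<psi> n w r) = (\<lambda>m\<in>insert n B. \<psi> m w r)"
    proof
      fix m
      show "((\<lambda>m\<in>B. \<psi> m (w(k := zero)) r)(n := \<psi> n w r)) m = (\<lambda>m\<in>insert n B. \<psi> m w r) m"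
        using B(1) psi_upd_eq[OF _ _ w kK, of m zero r] by (auto simp: zero_def)
    qed
    then have "g ((\<lambda>m\<in>B. \<psi> m (w(k := zero)) r)(n := \<psi> n w r)) = msg_sum K L w"
      using g w r by simp
    moreover have "(\<Sum>j\<in>{1..K} - {k}. restrict w ({1..K} - {k}) j l) = (\<Sum>j\<in>{1..K} - {k}. w j l)" for l
      by (rule sum.cong) simp_all
    ultimately show "h (\<psi> n w r) (restrict w ({1..K} - {k})) r = w"
      unfolding h_def restrict_msg_upd[OF w] using msg_upd_recover[OF w kK] by presburger
  qed
qed

lemma entropy_transmissions_snoc_ge:
  assumes ns: "set ns \<subseteq> {1..N}" and n: "n \<in> {1..N}"
    and k: "k \<in> Z n" and new: "\<forall>m\<in>set ns. k \<notin> Z m"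
    and enough: "Nr - 1 \<le> card {m\<in>{1..N}. k \<notin> Z m}"
  shows "\<H>(transmissions ns) + real L \<le> \<H>(transmissions (ns @ [n]))"
proof -
  have kK: "k \<in> {1..K}" using Z_sub n k by blast
  obtain h where h: "\<And>w r. w \<in> msg_space K L \<Longrightarrow> r \<in> set_pmf Q \<Longrightarrow>
      h (\<psi> n w r) (restrict w ({1..K} - {k})) r = w"
    using message_decodable_from_others[OF n k enough] by blast
  let ?others = "\<lambda>\<omega>. restrict (fst \<omega>) ({1..K} - {k})"
  let ?zero = "\<lambda>l\<in>{..<L}. 0 :: 'f"
  have "\<H>(transmissions ns) + \<H>(\<lambda>\<omega>. (fst \<omega>, snd \<omega>))
      \<le> \<H>(\<lambda>\<omega>. (\<psi> n (fst \<omega>) (snd \<omega>), transmissions ns \<omega>)) + \<H>(\<lambda>\<omega>. (?others \<omega>, snd \<omega>))"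
  proof (rule entropy_pair_ge_if_determined)
    fix \<omega> assume "\<omega> \<in> space M"
    then have w: "fst \<omega> \<in> msg_space K L" and r: "snd \<omega> \<in> set_pmf Q"
      by (auto simp: space_eq mem_Times_iff)
    show "transmissions ns \<omega> = (\<lambda>(v, r). map (\<lambda>m. \<psi> m (v(k := ?zero)) r) ns) (?others \<omega>, snd \<omega>)"
      unfolding transmissions_def prod.case restrict_msg_upd[OF w]
      using ns new psi_upd_eq[OF _ _ w kK] by auto
    show "(fst \<omega>, snd \<omega>) = (\<lambda>(x, v, r). (h x v r, r)) (\<psi> n (fst \<omega>) (snd \<omega>), ?others \<omega>, snd \<omega>)"
      using h[OF w r] by simp
  qed
  moreover have "\<H>(\<lambda>\<omega>. (\<psi> n (fst \<omega>) (snd \<omega>), transmissions ns \<omega>)) = \<H>(transmissions (ns @ [n]))"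
    by (rule entropy_eq_if_determined[where f = "\<lambda>xs. (last xs, butlast xs)" and g = "\<lambda>(x, xs). xs @ [x]"])
       (simp_all add: transmissions_def)
  moreover have "\<H>(\<lambda>\<omega>. (?others \<omega>, snd \<omega>)) \<le> real (L * (K - 1)) + \<H>(snd)"
    using entropy_pair_le[of ?others snd] entropy_other_messages_le[OF kK] by linarith
  moreover have "real (L * K) = real (L * (K - 1)) + real L"
    using kK by (cases K) (simp_all add: algebra_simps)
  ultimately show ?thesis
    using entropy_sample by linarith
qed

lemma entropy_transmissions_ge:
  assumes s: "set s \<subseteq> {1..N}"
    and new: "\<forall>i<length s. Z (s ! i) - (\<Union>j<i. Z (s ! j)) \<noteq> {}"
    and enough: "\<forall>k\<in>{1..K}. Nr - 1 \<le> card {n\<in>{1..N}. k \<notin> Z n}"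
  shows "real (length s) * real L \<le> \<H>(transmissions s)"
proof -
  have "real i * real L \<le> \<H>(transmissions (take i s))" if "i \<le> length s" for i
    using that
  proof (induction i)
    case 0
    show ?case by (simp add: entropy_nonneg)
  next
    case (Suc i)
    then have i: "i < length s" by simp
    then obtain k where k: "k \<in> Z (s ! i)" and k_new: "\<forall>j<i. k \<notin> Z (s ! j)"
      using new by blast
    have si: "s ! i \<in> {1..N}" using s nth_mem[OF i] by blast
    have "\<forall>m\<in>set (take i s). k \<notin> Z m"
      using k_new i by (auto simp: in_set_conv_nth)
    moreover have "set (take i s) \<subseteq> {1..N}" using s by (meson set_take_subset order_trans)
    moreover have "k \<in> {1..K}" using Z_sub si k by blast
    ultimately have "\<H>(transmissions (take i s)) + real L \<le> \<H>(transmissions (take (Suc i) s))"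
      using entropy_transmissions_snoc_ge[OF _ si k] enough by (simp add: take_Suc_conv_app_nth[OF i])
    then show ?case using Suc.IH i by (simp add: algebra_simps)
  qed
  from this[of "length s"] show ?thesis by simp
qed

lemma entropy_transmissions_le_randomness:
  assumes s: "set s \<subseteq> {1..N}"
    and secure: "\<I>(fst ; \<lambda>(w, r). \<lambda>n\<in>{1..N}. \<psi> n w r | \<lambda>(w, r). msg_sum K L w) = 0"
  shows "\<H>(transmissions s) \<le> \<H>(snd) + real L"
proof -
  have "\<H>(fst) + \<H>(transmissions s) \<le> \<H>(\<lambda>\<omega>. (fst \<omega>, transmissions s \<omega>)) + \<H>(\<lambda>(w, r). msg_sum K L w)"
    by (rule entropy_add_le_if_cond_indep[OF secure, where f = "msg_sum K L" and g = "\<lambda>x. map x s"])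
       (use s in \<open>auto simp: transmissions_def split_beta subset_iff\<close>)
  moreover have "\<H>(\<lambda>\<omega>. (fst \<omega>, transmissions s \<omega>)) \<le> \<H>(\<lambda>\<omega>. (fst \<omega>, snd \<omega>))"
    by (rule entropy_le_if_determined[where f = "\<lambda>\<omega>. (fst \<omega>, transmissions s \<omega>)"]) simp
  moreover have "\<H>(\<lambda>(w, r). msg_sum K L w) \<le> real L"
    using entropy_msg_sum_le by (simp add: split_beta')
  ultimately show ?thesis
    using entropy_sample entropy_messages by linarith
qed

lemma entropy_randomness_ge:
  assumes s: "set s \<subseteq> {1..N}"
    and new: "\<forall>i<length s. Z (s ! i) - (\<Union>j<i. Z (s ! j)) \<noteq> {}"
    and enough: "\<forall>k\<in>{1..K}. Nr - 1 \<le> card {n\<in>{1..N}. k \<notin> Z n}"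
    and secure: "\<I>(fst ; \<lambda>(w, r). \<lambda>n\<in>{1..N}. \<psi> n w r | \<lambda>(w, r). msg_sum K L w) = 0"
  shows "real (length s) - 1 \<le> \<H>(snd) / real L"
proof -
  have "(real (length s) - 1) * real L \<le> \<H>(snd)"
    using entropy_transmissions_ge[OF s new enough] entropy_transmissions_le_randomness[OF s secure]
    by (simp add: algebra_simps)
  then show ?thesis using L_pos by (simp add: le_divide_eq)
qed

end

theorem theorem3:
  fixes K N Nr M L :: nat
    and Z :: "nat \<Rightarrow> nat set"
    and Q :: "'r pmf"
    and T :: "nat \<Rightarrow> nat"
    and \<psi> :: "nat \<Rightarrow> (nat \<Rightarrow> nat \<Rightarrow> 'f::{finite,field}) \<Rightarrow> 'r \<Rightarrow> 'f list"
    and s :: "nat list"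
  assumes K_pos: "K > 0" and N_pos: "N > 0" and Nr_pos: "Nr > 0" and L_pos: "L > 0"
    and Nr_le: "Nr \<le> N" and N_dvd: "N dvd K"
    and M_eq: "M = (K div N) * (N - Nr + 1)"
    and Z_sub: "\<forall>n\<in>{1..N}. Z n \<subseteq> {1..K}"
    and Z_card: "\<forall>n\<in>{1..N}. card (Z n) \<le> M"
    and Q_fin: "finite (set_pmf Q)"
    and psi_len: "\<forall>n\<in>{1..N}. \<forall>w\<in>msg_space K L. \<forall>r\<in>set_pmf Q. length (\<psi> n w r) = T n"
    and psi_dep: "\<forall>n\<in>{1..N}. \<forall>w\<in>msg_space K L. \<forall>w'\<in>msg_space K L. \<forall>r.
                    (\<forall>k\<in>Z n. w k = w' k) \<longrightarrow> \<psi> n w r = \<psi> n w' r"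
    and decodable: "\<forall>A. A \<subseteq> {1..N} \<and> card A = Nr \<longrightarrow>
                    (\<exists>g. \<forall>w\<in>msg_space K L. \<forall>r\<in>set_pmf Q.
                        g (\<lambda>n\<in>A. \<psi> n w r) = msg_sum K L w)"
    and secure: "prob_space.conditional_mutual_information
                   (sample_space K L Q :: ((nat \<Rightarrow> nat \<Rightarrow> 'f) \<times> 'r) measure) (real CARD('f))
                   (count_space (fst ` space (sample_space K L Q)))
                   (count_space ((\<lambda>(w, r). \<lambda>n\<in>{1..N}. \<psi> n w r) ` space (sample_space K L Q)))
                   (count_space ((\<lambda>(w, r). msg_sum K L w) ` space (sample_space K L Q)))
                   fst (\<lambda>(w, r). \<lambda>n\<in>{1..N}. \<psi> n w r) (\<lambda>(w, r). msg_sum K L w) = 0"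
    and s_sub: "set s \<subseteq> {1..N}"
    and s_new: "\<forall>i<length s. Z (s ! i) - (\<Union>j<i. Z (s ! j)) \<noteq> {}"
  shows "prob_space.entropy (sample_space K L Q :: ((nat \<Rightarrow> nat \<Rightarrow> 'f) \<times> 'r) measure) (real CARD('f))
           (count_space (snd ` space (sample_space K L Q))) snd / real L
         \<ge> real (length s) - 1"
proof -
  have "N * (K div N) = K" using N_dvd by simp
  then have storage: "N * M = K * (N - Nr + 1)"
    unfolding M_eq by (metis mult.assoc)
  interpret distributed_sum_scheme "sample_space K L Q" "real CARD('f)" K N Nr L Z Q \<psi>
    using distributed_sum_scheme.intro[OF finite_information_space_sample_space[OF Q_fin]
        distributed_sum_scheme_axioms.intro[OF refl refl L_pos Z_sub psi_dep decodable]] .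
  have "\<forall>k\<in>{1..K}. Nr - 1 \<le> card {n\<in>{1..N}. k \<notin> Z n}"
    using card_servers_without_eq_if_storage_tight[OF Nr_le storage Z_sub Z_card] card_servers_without_lt by simp
  (* In the statement, snd ` space (sample_space K L Q) lives at an unrelated message type. *)
  from entropy_randomness_ge[OF s_sub s_new this secure] show ?thesis
    by (simp only: snd_space_sample_space)
qed

end
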